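(* There is a Borel map $d:\{(u,v)\in[0,\infty]^{\mathbb N}\times[0,\infty]^{\mathbb N}\mid\sum_iu(i)=\sum_jv(j)\}\to[0,\infty]^{\mathbb N^2}$ such that for all $(u,v)$ in its domain and all $i,j\in\mathbb N$, $u(i)=\sum_jd(u,v)(i,j)$ and $v(j)=\sum_id(u,v)(i,j)$.
   Context: $[0,\infty]^{\mathbb N}$ and $[0,\infty]^{\mathbb N^2}$ carry their standard product Borel structures. *)

theory Defs
  imports "HOL-Probability.Probability"
begin

definition seqM :: "(nat \<Rightarrow> ennreal) measure" where
  "seqM = PiM UNIV (\<lambda>_. borel)"

definition arrM :: "(nat \<times> nat \<Rightarrow> ennreal) measure" where
  "arrM = PiM UNIV (\<lambda>_. borel)"

definition coupling_dom :: "((nat \<Rightarrow> ennreal) \<times> (nat \<Rightarrow> ennreal)) set" where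
  "coupling_dom = {(u, v). (\<Sum>i. u i) = (\<Sum>j. v j)}"

end

theory Submission imports Defs begin

text \<open>
  For sequences with finite entries we use the northwest corner rule: lay the masses of \<open>u\<close>
  and of \<open>v\<close> consecutively on the half line, as the intervals
  \<open>[U m, U (m+1)]\<close> and \<open>[V n, V (n+1)]\<close> between partial sums, and give the cell \<open>(m, n)\<close>
  the length of their overlap. Row \<open>m\<close> then telescopes to the length of
  \<open>[U m, U (m+1)] \<inter> [0, \<Sum>v]\<close>, which is \<open>u m\<close> as soon as \<open>\<Sum>u \<le> \<Sum>v\<close>.
  Infinite entries are removed beforehand by replacing each index \<open>i\<close> with a countable block
  of indices carrying total mass \<open>u i\<close>, each of finite mass; summing the coupling of the
  refined sequences over blocks gives the required coupling. Every cell is a countable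
  combination of Borel operations applied to coordinates, hence the map is Borel.
\<close>

definition cum_mass :: "(nat \<Rightarrow> ennreal) \<Rightarrow> nat \<Rightarrow> real" where
  "cum_mass a n = (\<Sum>k<n. enn2real (a k))"

definition northwest_coupling :: "(nat \<Rightarrow> ennreal) \<Rightarrow> (nat \<Rightarrow> ennreal) \<Rightarrow> nat \<Rightarrow> nat \<Rightarrow> ennreal"
  where "northwest_coupling a b m n =
    ennreal (min (cum_mass a (Suc m)) (cum_mass b (Suc n)) - max (cum_mass a m) (cum_mass b n))"

lemma cum_mass_nonneg: "0 \<le> cum_mass a n"
  unfolding cum_mass_def by (auto intro: sum_nonneg)

lemma cum_mass_mono: "m \<le> n \<Longrightarrow> cum_mass a m \<le> cum_mass a n"
  unfolding cum_mass_def by (intro sum_mono2) auto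

lemma ennreal_cum_mass: "(\<And>k. a k \<noteq> \<top>) \<Longrightarrow> ennreal (cum_mass a n) = (\<Sum>k<n. a k)"
  unfolding cum_mass_def by (subst sum_ennreal[symmetric]) (auto simp: ennreal_enn2real_if)

lemma northwest_coupling_commute: "northwest_coupling a b m n = northwest_coupling b a n m"
  unfolding northwest_coupling_def by (simp add: min.commute max.commute)

lemma sum_northwest_coupling_row:
  "(\<Sum>n<N. northwest_coupling a b m n) =
    ennreal (max 0 (min (cum_mass a (Suc m)) (cum_mass b N) - cum_mass a m))"
proof (induction N)
  case 0
  show ?case using cum_mass_nonneg[of a m] cum_mass_mono[of m "Suc m" a]
    by (simp add: cum_mass_def)
next
  case (Suc N)
  define g where "g t = max 0 (min (cum_mass a (Suc m)) t - cum_mass a m)" for t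
  have mono: "cum_mass b N \<le> cum_mass b (Suc N)"
    by (rule cum_mass_mono) simp
  have "max 0 (min (cum_mass a (Suc m)) (cum_mass b (Suc N)) - max (cum_mass a m) (cum_mass b N)) =
      g (cum_mass b (Suc N)) - g (cum_mass b N)"
    using mono cum_mass_mono[of m "Suc m" a] unfolding g_def by (auto simp: min_def max_def)
  then have cell: "northwest_coupling a b m N = ennreal (g (cum_mass b (Suc N)) - g (cum_mass b N))"
    unfolding northwest_coupling_def by (metis ennreal_max_0)
  have "(\<Sum>n<Suc N. northwest_coupling a b m n) =
      ennreal (g (cum_mass b N)) + ennreal (g (cum_mass b (Suc N)) - g (cum_mass b N))"
    using Suc cell by (simp add: g_def)
  also have "\<dots> = ennreal (g (cum_mass b (Suc N)))"
    using mono by (subst ennreal_plus[symmetric]) (auto simp: g_def min_def max_def)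
  finally show ?case by (simp add: g_def)
qed

lemma suminf_northwest_coupling_row:
  assumes fin_a: "\<And>k. a k \<noteq> \<top>" and fin_b: "\<And>k. b k \<noteq> \<top>"
    and le: "(\<Sum>k. a k) \<le> (\<Sum>k. b k)"
  shows "(\<Sum>n. northwest_coupling a b m n) = a m"
proof -
  define X where "X = cum_mass a m"
  define Y where "Y = cum_mass a (Suc m)"
  have X0: "0 \<le> X" and XY: "X \<le> Y"
    unfolding X_def Y_def by (simp_all add: cum_mass_nonneg cum_mass_mono)
  have partial: "(\<Sum>n<N. northwest_coupling a b m n) =
      min (ennreal Y) (ennreal (cum_mass b N)) - ennreal X" for N
    using X0 XY cum_mass_nonneg[of b N]
    by (simp add: sum_northwest_coupling_row X_def Y_def min_ennreal ennreal_minus)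
  have "(\<lambda>N. ennreal (cum_mass b N)) \<longlonglongrightarrow> (\<Sum>k. b k)"
    using fin_b by (simp add: ennreal_cum_mass summable_LIMSEQ)
  then have "(\<lambda>N. \<Sum>n<N. northwest_coupling a b m n) \<longlonglongrightarrow> min (ennreal Y) (\<Sum>k. b k) - ennreal X"
    unfolding partial
    by (intro tendsto_diff_ennreal tendsto_min tendsto_const)
      (auto simp: min_def split: if_splits)
  then have "(\<Sum>n. northwest_coupling a b m n) = min (ennreal Y) (\<Sum>k. b k) - ennreal X"
    using LIMSEQ_unique summable_LIMSEQ summableI by blast
  moreover have "ennreal Y \<le> (\<Sum>k. b k)"
  proof -
    have "ennreal Y = (\<Sum>k<Suc m. a k)"
      unfolding Y_def using fin_a by (simp add: ennreal_cum_mass)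
    also have "\<dots> \<le> (\<Sum>k. a k)"
      by (rule sum_le_suminf) auto
    finally show ?thesis using le by simp
  qed
  moreover have "ennreal Y - ennreal X = a m"
    using X0 fin_a unfolding X_def Y_def
    by (simp add: cum_mass_def ennreal_minus ennreal_enn2real_if)
  ultimately show ?thesis by simp
qed

lemma suminf_comm_ennreal: "(\<Sum>i. \<Sum>j. f i j :: ennreal) = (\<Sum>j. \<Sum>i. f i j)"
proof -
  interpret pair_sigma_finite "count_space (UNIV::nat set)" "count_space (UNIV::nat set)"
    by (intro pair_sigma_finite.intro sigma_finite_measure_count_space_countable) auto
  have "(\<lambda>(x, y). f x y) \<in> borel_measurable (count_space UNIV \<Otimes>\<^sub>M count_space UNIV)"
    by (simp add: pair_measure_countable)
  from Fubini'[OF this] show ?thesis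
    by (simp add: nn_integral_count_space_nat)
qed

lemma suminf_prod_encode_ennreal:
  "(\<Sum>i. \<Sum>l. f (prod_encode (i, l))) = (\<Sum>n. f n :: ennreal)"
  using suminf_ennreal_2dimen[of "\<lambda>i. \<Sum>l. f (prod_encode (i, l))" "\<lambda>(i, l). f (prod_encode (i, l))"]
  by simp

text \<open>Index \<open>prod_encode (i, l)\<close> is the \<open>l\<close>-th piece of the block of \<open>i\<close>; an infinite
  entry is spread as infinitely many unit pieces.\<close>

definition split_infinite :: "(nat \<Rightarrow> ennreal) \<Rightarrow> nat \<Rightarrow> ennreal" where
  "split_infinite u k = (if u (fst (prod_decode k)) = \<top> then 1
     else if snd (prod_decode k) = 0 then u (fst (prod_decode k)) else 0)"

lemma split_infinite_neq_top: "split_infinite u k \<noteq> \<top>"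
  unfolding split_infinite_def by auto

lemma suminf_split_infinite_block: "(\<Sum>l. split_infinite u (prod_encode (i, l))) = u i"
proof (cases "u i = \<top>")
  case True
  have "(\<Sum>l::nat. ennreal 1) = \<top>"
    by (rule summable_iff_suminf_neq_top) (auto simp: summable_const_iff)
  with True show ?thesis by (simp add: split_infinite_def)
next
  case False
  have "(\<Sum>l. split_infinite u (prod_encode (i, l))) = (\<Sum>l\<in>{0}. split_infinite u (prod_encode (i, l)))"
    by (rule suminf_finite) (auto simp: split_infinite_def False)
  with False show ?thesis by (simp add: split_infinite_def)
qed

lemma suminf_split_infinite: "(\<Sum>k. split_infinite u k) = (\<Sum>i. u i)"
  using suminf_prod_encode_ennreal[of "split_infinite u"] by (simp add: suminf_split_infinite_block)

definition coupling :: "(nat \<Rightarrow> ennreal) \<times> (nat \<Rightarrow> ennreal) \<Rightarrow> nat \<times> nat \<Rightarrow> ennreal" where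
  "coupling = (\<lambda>(u, v) (i, j). \<Sum>l. \<Sum>l'.
     northwest_coupling (split_infinite u) (split_infinite v) (prod_encode (i, l)) (prod_encode (j, l')))"

lemma measurable_coupling: "coupling \<in> seqM \<Otimes>\<^sub>M seqM \<rightarrow>\<^sub>M arrM"
  unfolding arrM_def
proof (rule measurable_PiM_single')
  fix ij :: "nat \<times> nat"
  obtain i j where "ij = (i, j)" by (cases ij)
  then show "(\<lambda>p. coupling p ij) \<in> borel_measurable (seqM \<Otimes>\<^sub>M seqM)"
    unfolding coupling_def northwest_coupling_def cum_mass_def split_infinite_def seqM_def
    by (simp add: case_prod_beta') measurable
qed (auto simp: PiE_def)

lemma coupling_swap: "coupling (v, u) (j, i) = coupling (u, v) (i, j)"
  unfolding coupling_def
  by (simp add: northwest_coupling_commute suminf_comm_ennreal[where f =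
    "\<lambda>l l'. northwest_coupling (split_infinite u) (split_infinite v) (prod_encode (i, l)) (prod_encode (j, l'))"])

lemma suminf_coupling_row:
  assumes "(\<Sum>i. u i) \<le> (\<Sum>j. v j)"
  shows "(\<Sum>j. coupling (u, v) (i, j)) = u i"
proof -
  let ?c = "northwest_coupling (split_infinite u) (split_infinite v)"
  have "(\<Sum>j. coupling (u, v) (i, j)) = (\<Sum>j. \<Sum>l. \<Sum>l'. ?c (prod_encode (i, l)) (prod_encode (j, l')))"
    by (simp add: coupling_def)
  also have "\<dots> = (\<Sum>l. \<Sum>j. \<Sum>l'. ?c (prod_encode (i, l)) (prod_encode (j, l')))"
    by (rule suminf_comm_ennreal)
  also have "\<dots> = (\<Sum>l. \<Sum>n. ?c (prod_encode (i, l)) n)"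
    by (simp add: suminf_prod_encode_ennreal)
  also have "\<dots> = (\<Sum>l. split_infinite u (prod_encode (i, l)))"
    using assms
    by (simp add: suminf_northwest_coupling_row split_infinite_neq_top suminf_split_infinite)
  also have "\<dots> = u i"
    by (rule suminf_split_infinite_block)
  finally show ?thesis .
qed

lemma suminf_coupling_col:
  assumes "(\<Sum>j. v j) \<le> (\<Sum>i. u i)"
  shows "(\<Sum>i. coupling (u, v) (i, j)) = v j"
  using suminf_coupling_row[OF assms, of j] by (simp add: coupling_swap)

theorem lemma4p17:
  shows "\<exists>d. d \<in> restrict_space (seqM \<Otimes>\<^sub>M seqM) coupling_dom \<rightarrow>\<^sub>M arrM \<and>
    (\<forall>u v. (u, v) \<in> coupling_dom \<longrightarrow>
       (\<forall>i. u i = (\<Sum>j. d (u, v) (i, j))) \<and> (\<forall>j. v j = (\<Sum>i. d (u, v) (i, j))))"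
proof (intro exI[of _ coupling] conjI allI impI)
  show "coupling \<in> restrict_space (seqM \<Otimes>\<^sub>M seqM) coupling_dom \<rightarrow>\<^sub>M arrM"
    by (rule measurable_restrict_space1[OF measurable_coupling])
next
  fix u v i j
  assume "(u, v) \<in> coupling_dom"
  then have "(\<Sum>i. u i) = (\<Sum>j. v j)"
    by (simp add: coupling_dom_def)
  then show "u i = (\<Sum>j. coupling (u, v) (i, j))" and "v j = (\<Sum>i. coupling (u, v) (i, j))"
    by (simp_all add: suminf_coupling_row suminf_coupling_col)
qed

end
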